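(* Let $\mathbb{X}$ be a finite set and let $G=(G(x,y))_{x,y\in\mathbb{X}}$ be a real symmetric, conditionally positive semi-definite matrix which has an equilibrium measure $\nu^*\in\mathcal{P}_+$. Let $\{a_k\}_{k=0}^\infty$ be a Leja sequence with respect to $G$, and for $n\ge 1$ let $\sigma_n=\frac1n\sum_{j=0}^{n-1}\delta_{a_j}$. Let $M=\max_{x\in\mathbb{X}}|G(x,x)|$. Then for every integer $n\ge 1$, $$G(\sigma_n-\nu^*,\sigma_n-\nu^* )\le \frac{1}{n}\left(M-G(\nu^*,\nu^* )\right).$$ Moreover, any weak-star limit of a subsequence of $\{\sigma_n\}$ is also an equilibrium measure for $G$.
   Context: Functions $\nu:\mathbb{X}\to\mathbb{R}$ are identified with measures/vectors on $\mathbb{X}$; $\delta_a$ is the Dirac measure at $a$. For such $\mu,\nu$ write $G(x,\nu)=\sum_{y}G(x,y)\nu(y)$ and $G(\mu,\nu)=\sum_{x,y}G(x,y)\mu(x)\nu(y)$. $\mathcal{P}$ is the set of probability measures on $\mathbb{X}$, and $\mathcal{P}_+$ the set of $\nu\in\mathcal{P}$ with $\nu(x)>0$ for all $x$. $G$ is conditionally positive semi-definite if $v^\intercal Gv\ge 0$ whenever $\sum_x v(x)=0$. A measure $\nu^*\in\mathcal{P}$ is an equilibrium measure for $G$ if $G(\nu^*,\nu^* )=\min_{\nu\in\mathcal{P}}G(\nu,\nu)$. A Leja sequence with respect to $G$ is a sequence $\{a_k\}_{k=0}^\infty$ in $\mathbb{X}$ ($a_0$ arbitrary) such that for each $k\ge1$,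 $a_k$ minimizes $x\mapsto\sum_{j=0}^{k-1}G(x,a_j)$ over $\mathbb{X}$ (ties broken arbitrarily; points may repeat). *)

theory Defs
  imports Main "HOL-Analysis.Analysis"
begin

text \<open>Measures on the finite set X (a finite type 'a) are functions 'a => real.\<close>

definition Gform :: "('a::finite \<Rightarrow> 'a \<Rightarrow> real) \<Rightarrow> ('a \<Rightarrow> real) \<Rightarrow> ('a \<Rightarrow> real) \<Rightarrow> real" where
  "Gform G \<mu> \<nu> = (\<Sum>x\<in>UNIV. \<Sum>y\<in>UNIV. G x y * \<mu> x * \<nu> y)"

definition prob_meas :: "('a::finite \<Rightarrow> real) \<Rightarrow> bool" where
  "prob_meas \<nu> \<longleftrightarrow> (\<forall>x. 0 \<le> \<nu> x) \<and> (\<Sum>x\<in>UNIV. \<nu> x) = 1"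

definition pos_prob_meas :: "('a::finite \<Rightarrow> real) \<Rightarrow> bool" where
  "pos_prob_meas \<nu> \<longleftrightarrow> prob_meas \<nu> \<and> (\<forall>x. 0 < \<nu> x)"

definition cond_psd :: "('a::finite \<Rightarrow> 'a \<Rightarrow> real) \<Rightarrow> bool" where
  "cond_psd G \<longleftrightarrow> (\<forall>v. (\<Sum>x\<in>UNIV. v x) = 0 \<longrightarrow> 0 \<le> Gform G v v)"

definition equilibrium_measure :: "('a::finite \<Rightarrow> 'a \<Rightarrow> real) \<Rightarrow> ('a \<Rightarrow> real) \<Rightarrow> bool" where
  "equilibrium_measure G \<nu> \<longleftrightarrow> prob_meas \<nu> \<and> (\<forall>\<mu>. prob_meas \<mu> \<longrightarrow> Gform G \<nu> \<nu> \<le> Gform G \<mu> \<mu>)"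

definition leja_seq :: "('a::finite \<Rightarrow> 'a \<Rightarrow> real) \<Rightarrow> (nat \<Rightarrow> 'a) \<Rightarrow> bool" where
  "leja_seq G a \<longleftrightarrow> (\<forall>k\<ge>1. \<forall>x. (\<Sum>j<k. G (a k) (a j)) \<le> (\<Sum>j<k. G x (a j)))"

definition dirac :: "'a \<Rightarrow> 'a \<Rightarrow> real" where
  "dirac a = (\<lambda>x. if x = a then 1 else 0)"

definition empirical :: "(nat \<Rightarrow> 'a) \<Rightarrow> nat \<Rightarrow> 'a \<Rightarrow> real" where
  "empirical a n = (\<lambda>x. (1 / real n) * (\<Sum>j<n. dirac (a j) x))"

end

theory Submission
  imports Defs
begin

text \<open>Since \<open>\<nu>*\<close> charges every point, it can be perturbed in every direction
  \<open>\<delta>\<^sub>x - \<delta>\<^sub>y\<close>; first-order optimality then forces the potential \<open>G(x, \<nu>*)\<close> to be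
  constant, equal to \<open>c = G(\<nu>*, \<nu>*)\<close>. Consequently \<open>G(\<sigma>\<^sub>n - \<nu>*, \<sigma>\<^sub>n - \<nu>*) = G(\<sigma>\<^sub>n, \<sigma>\<^sub>n) - c\<close>.
  Averaging the minimality of \<open>a\<^sub>k\<close> against \<open>\<nu>*\<close> gives \<open>\<Sum>j<k. G(a\<^sub>k, a\<^sub>j) \<le> k c\<close>, and
  summing over \<open>k < n\<close> yields \<open>n\<^sup>2 G(\<sigma>\<^sub>n, \<sigma>\<^sub>n) \<le> n M + n (n - 1) c\<close>. A pointwise limit of
  a subsequence of \<open>\<sigma>\<^sub>n\<close> is then a probability measure of energy at most \<open>c\<close>.\<close>

definition potential :: "('a::finite \<Rightarrow> 'a \<Rightarrow> real) \<Rightarrow> ('a \<Rightarrow> real) \<Rightarrow> 'a \<Rightarrow> real" where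
  "potential G \<nu> x = (\<Sum>y\<in>UNIV. G x y * \<nu> y)"

lemma Gform_eq_sum_potential: "Gform G \<mu> \<nu> = (\<Sum>x\<in>UNIV. \<mu> x * potential G \<nu> x)"
  unfolding Gform_def potential_def by (simp add: sum_distrib_left algebra_simps)

lemma Gform_commute:
  fixes G :: "'a::finite \<Rightarrow> 'a \<Rightarrow> real"
  assumes "\<And>x y. G x y = G y x"
  shows "Gform G \<mu> \<nu> = Gform G \<nu> \<mu>"
  unfolding Gform_def using assms by (subst sum.swap) (simp add: algebra_simps)

lemma Gform_add_scaled:
  fixes G :: "'a::finite \<Rightarrow> 'a \<Rightarrow> real"
  assumes "\<And>x y. G x y = G y x"
  shows "Gform G (\<lambda>z. \<nu> z + t * v z) (\<lambda>z. \<nu> z + t * v z)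
           = Gform G \<nu> \<nu> + 2 * t * Gform G v \<nu> + t\<^sup>2 * Gform G v v"
proof -
  have "Gform G (\<lambda>z. \<nu> z + t * v z) (\<lambda>z. \<nu> z + t * v z)
          = Gform G \<nu> \<nu> + t * (Gform G v \<nu> + Gform G \<nu> v) + t\<^sup>2 * Gform G v v"
    unfolding Gform_def by (simp add: algebra_simps sum.distrib sum_distrib_left power2_eq_square)
  moreover have "Gform G \<nu> v = Gform G v \<nu>"
    by (rule Gform_commute[OF assms])
  ultimately show ?thesis
    by simp
qed

lemma Gform_diff:
  "Gform G (\<lambda>z. \<mu> z - \<nu> z) (\<lambda>z. \<mu> z - \<nu> z)
     = Gform G \<mu> \<mu> - Gform G \<mu> \<nu> - Gform G \<nu> \<mu> + Gform G \<nu> \<nu>"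
  unfolding Gform_def by (simp add: algebra_simps sum.distrib sum_subtractf sum_distrib_left)

lemma tendsto_Gform:
  assumes "\<And>x. (\<lambda>k. \<mu> k x) \<longlonglongrightarrow> \<mu>' x"
  shows "(\<lambda>k. Gform G (\<mu> k) (\<mu> k)) \<longlonglongrightarrow> Gform G \<mu>' \<mu>'"
  unfolding Gform_def by (intro tendsto_sum tendsto_mult tendsto_const assms)

lemma sum_dirac_mult: "(\<Sum>x\<in>UNIV. dirac (b::'a::finite) x * f x) = (f b :: real)"
proof -
  have "(\<Sum>x\<in>UNIV. dirac b x * f x) = (\<Sum>x\<in>UNIV. if x = b then f b else 0)"
    unfolding dirac_def by (rule sum.cong) auto
  also have "\<dots> = f b"
    by (subst sum.delta) auto
  finally show ?thesis .
qed

lemma sum_empirical_mult: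
  fixes a :: "nat \<Rightarrow> 'a::finite"
  shows "(\<Sum>x\<in>UNIV. empirical a n x * f x) = (\<Sum>j<n. f (a j)) / real n"
proof -
  have "(\<Sum>x\<in>UNIV. empirical a n x * f x) = (\<Sum>j<n. \<Sum>x\<in>UNIV. dirac (a j) x * f x) / real n"
    unfolding empirical_def
    by (simp add: sum_distrib_left sum_distrib_right sum.swap[of _ "{..<n}"] sum_divide_distrib algebra_simps)
  also have "\<dots> = (\<Sum>j<n. f (a j)) / real n"
    by (simp only: sum_dirac_mult)
  finally show ?thesis .
qed

lemma prob_meas_empirical:
  assumes "n \<ge> 1"
  shows "prob_meas (empirical a n)"
  using assms sum_empirical_mult[of a n "\<lambda>_. 1"]
  unfolding prob_meas_def by (simp add: empirical_def dirac_def sum_nonneg)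

lemma Gform_empirical:
  "Gform G (empirical a n) (empirical a n) = (\<Sum>i<n. \<Sum>j<n. G (a i) (a j)) / (real n)\<^sup>2"
proof -
  have "potential G (empirical a n) x = (\<Sum>j<n. G x (a j)) / real n" for x
    unfolding potential_def using sum_empirical_mult[of a n "G x"] by (simp add: mult.commute)
  then show ?thesis
    unfolding Gform_eq_sum_potential sum_empirical_mult
    by (simp add: sum_divide_distrib[symmetric] power2_eq_square)
qed

lemma prob_meas_LIMSEQ:
  assumes "\<And>x. (\<lambda>k. \<mu> k x) \<longlonglongrightarrow> \<mu>' x"
    and "eventually (\<lambda>k. prob_meas (\<mu> k)) sequentially"
  shows "prob_meas \<mu>'"
proof -
  have "0 \<le> \<mu>' x" for x
    using assms(2) by (intro LIMSEQ_le_const[OF assms(1)]) (auto simp: prob_meas_def eventually_sequentially)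
  moreover have "(\<lambda>k. \<Sum>x\<in>UNIV. \<mu> k x) \<longlonglongrightarrow> (\<Sum>x\<in>UNIV. \<mu>' x)"
    by (intro tendsto_sum assms(1))
  moreover have "(\<lambda>k. \<Sum>x\<in>UNIV. \<mu> k x) \<longlonglongrightarrow> 1"
    using assms(2) by (intro tendsto_eventually) (auto simp: prob_meas_def elim: eventually_mono)
  ultimately show ?thesis
    unfolding prob_meas_def using LIMSEQ_unique by blast
qed

lemma linear_coeff_eq_0_if_quadratic_nonneg:
  fixes B C m :: real
  assumes "0 < m" and nonneg: "\<And>t. \<bar>t\<bar> \<le> m \<Longrightarrow> 0 \<le> t * B + t\<^sup>2 * C"
  shows "B = 0"
proof (rule ccontr)
  assume "B \<noteq> 0"
  define t where "t = min m (\<bar>B\<bar> / (\<bar>C\<bar> + 1))"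
  have "0 < t"
    using \<open>0 < m\<close> \<open>B \<noteq> 0\<close> by (simp add: t_def)
  have "t * C \<le> t * \<bar>C\<bar>"
    using \<open>0 < t\<close> by (simp add: mult_left_mono)
  also have "\<dots> < t * (\<bar>C\<bar> + 1)"
    using \<open>0 < t\<close> by simp
  also have "\<dots> \<le> \<bar>B\<bar>"
    unfolding t_def by (simp add: min_def pos_le_divide_eq add_pos_nonneg)
  finally have small: "t * C < \<bar>B\<bar>" .
  have "\<bar>t\<bar> \<le> m" "\<bar>- t\<bar> \<le> m"
    using \<open>0 < t\<close> by (simp_all add: t_def)
  then have "0 \<le> t * B + t\<^sup>2 * C" "0 \<le> (- t) * B + (- t)\<^sup>2 * C"
    using nonneg by blast+
  then have "0 \<le> t * (B + t * C)" "0 \<le> t * (- B + t * C)"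
    by (simp_all add: power2_eq_square algebra_simps)
  then have "\<bar>B\<bar> \<le> t * C"
    using \<open>0 < t\<close> by (simp add: zero_le_mult_iff)
  then show False
    using small by simp
qed

lemma prob_meas_perturb_dirac:
  assumes "prob_meas \<nu>" and "\<bar>t\<bar> \<le> min (\<nu> x) (\<nu> y)"
  shows "prob_meas (\<lambda>z. \<nu> z + t * (dirac x z - dirac y z))"
proof -
  have "0 \<le> \<nu> z + t * (dirac x z - dirac y z)" for z
    using assms unfolding prob_meas_def dirac_def by (auto simp: abs_le_iff)
  moreover have "(\<Sum>z\<in>UNIV. dirac x z - dirac y z) = 0"
    using sum_dirac_mult[of x "\<lambda>_. 1"] sum_dirac_mult[of y "\<lambda>_. 1"] by (simp add: sum_subtractf)
  ultimately show ?thesis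
    using assms(1) unfolding prob_meas_def by (simp add: sum.distrib sum_distrib_left[symmetric])
qed

lemma equilibrium_potential_eq:
  fixes G :: "'a::finite \<Rightarrow> 'a \<Rightarrow> real"
  assumes symm: "\<And>x y. G x y = G y x"
    and eq: "equilibrium_measure G \<nu>" and pos: "\<And>x. 0 < \<nu> x"
  shows "potential G \<nu> x = potential G \<nu> y"
proof -
  define v where "v z = dirac x z - dirac y z" for z
  have "2 * Gform G v \<nu> = 0"
  proof (rule linear_coeff_eq_0_if_quadratic_nonneg[where m = "min (\<nu> x) (\<nu> y)"])
    show "0 < min (\<nu> x) (\<nu> y)"
      using pos by simp
    fix t :: real
    assume "\<bar>t\<bar> \<le> min (\<nu> x) (\<nu> y)"
    then have "prob_meas (\<lambda>z. \<nu> z + t * v z)"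
      using eq prob_meas_perturb_dirac unfolding equilibrium_measure_def v_def by blast
    then have "Gform G \<nu> \<nu> \<le> Gform G (\<lambda>z. \<nu> z + t * v z) (\<lambda>z. \<nu> z + t * v z)"
      using eq unfolding equilibrium_measure_def by blast
    then show "0 \<le> t * (2 * Gform G v \<nu>) + t\<^sup>2 * Gform G v v"
      unfolding Gform_add_scaled[OF symm] by simp
  qed
  moreover have "Gform G v \<nu> = potential G \<nu> x - potential G \<nu> y"
    unfolding Gform_eq_sum_potential v_def by (simp add: left_diff_distrib sum_subtractf sum_dirac_mult)
  ultimately show ?thesis
    by simp
qed

lemma equilibrium_potential_const:
  fixes G :: "'a::finite \<Rightarrow> 'a \<Rightarrow> real"
  assumes "\<And>x y. G x y = G y x"
    and eq: "equilibrium_measure G \<nu>" and "\<And>x. 0 < \<nu> x"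
  shows "potential G \<nu> x = Gform G \<nu> \<nu>"
proof -
  have "Gform G \<nu> \<nu> = (\<Sum>z\<in>UNIV. \<nu> z * potential G \<nu> x)"
    unfolding Gform_eq_sum_potential using equilibrium_potential_eq[OF assms] by metis
  also have "\<dots> = potential G \<nu> x"
    using eq by (simp add: equilibrium_measure_def prob_meas_def sum_distrib_right[symmetric])
  finally show ?thesis
    by simp
qed

lemma Gform_const_potential:
  assumes "\<And>x. potential G \<nu> x = c"
  shows "Gform G \<mu> \<nu> = c * (\<Sum>x\<in>UNIV. \<mu> x)"
  unfolding Gform_eq_sum_potential assms by (simp add: sum_distrib_left mult.commute)

lemma leja_sum_le:
  fixes G :: "'a::finite \<Rightarrow> 'a \<Rightarrow> real"
  assumes symm: "\<And>x y. G x y = G y x" and leja: "leja_seq G a"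
    and "prob_meas \<nu>" and pot: "\<And>x. potential G \<nu> x = c"
  shows "(\<Sum>j<n. G (a n) (a j)) \<le> real n * c"
proof -
  have le: "(\<Sum>j<n. G (a n) (a j)) \<le> (\<Sum>j<n. G x (a j))" for x
    using leja unfolding leja_seq_def by (cases "n = 0") auto
  have "(\<Sum>x\<in>UNIV. \<nu> x * (\<Sum>j<n. G (a n) (a j))) \<le> (\<Sum>x\<in>UNIV. \<nu> x * (\<Sum>j<n. G x (a j)))"
    using \<open>prob_meas \<nu>\<close> le unfolding prob_meas_def by (meson sum_mono mult_left_mono)
  then have "(\<Sum>j<n. G (a n) (a j)) \<le> (\<Sum>x\<in>UNIV. \<nu> x * (\<Sum>j<n. G x (a j)))"
    using \<open>prob_meas \<nu>\<close> unfolding prob_meas_def by (simp add: sum_distrib_right[symmetric])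
  also have "\<dots> = (\<Sum>j<n. potential G \<nu> (a j))"
    unfolding potential_def by (simp add: sum_distrib_left sum.swap[of _ UNIV] symm mult.commute)
  finally show ?thesis
    by (simp add: pot)
qed

lemma leja_energy_le:
  fixes G :: "'a::finite \<Rightarrow> 'a \<Rightarrow> real"
  assumes symm: "\<And>x y. G x y = G y x" and "leja_seq G a"
    and "prob_meas \<nu>" and "\<And>x. potential G \<nu> x = c" and diag: "\<And>x. G x x \<le> M"
  shows "(\<Sum>i<n. \<Sum>j<n. G (a i) (a j)) \<le> real n * M + real n * (real n - 1) * c"
proof (induction n)
  case 0
  then show ?case by simp
next
  case (Suc n)
  have "(\<Sum>i<Suc n. \<Sum>j<Suc n. G (a i) (a j))
          = (\<Sum>i<n. \<Sum>j<n. G (a i) (a j)) + 2 * (\<Sum>j<n. G (a n) (a j)) + G (a n) (a n)"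
    using symm by (simp add: sum.distrib)
  also have "\<dots> \<le> (real n * M + real n * (real n - 1) * c) + 2 * (real n * c) + M"
    using Suc.IH leja_sum_le[OF assms(1-4), of n] diag[of "a n"] by linarith
  finally show ?case
    by (simp add: algebra_simps)
qed

lemma leja_empirical_energy_le:
  fixes G :: "'a::finite \<Rightarrow> 'a \<Rightarrow> real"
  assumes "\<And>x y. G x y = G y x" and "leja_seq G a"
    and "prob_meas \<nu>" and "\<And>x. potential G \<nu> x = c" and "\<And>x. G x x \<le> M"
    and "n \<ge> 1"
  shows "Gform G (empirical a n) (empirical a n) \<le> c + (M - c) / real n"
proof -
  have "Gform G (empirical a n) (empirical a n) \<le> (real n * M + real n * (real n - 1) * c) / (real n)\<^sup>2"
    unfolding Gform_empirical by (intro divide_right_mono leja_energy_le[OF assms(1-5)]) simp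
  also have "\<dots> = c + (M - c) / real n"
    using \<open>n \<ge> 1\<close> by (simp add: field_simps power2_eq_square)
  finally show ?thesis .
qed

lemma Gform_diff_const_potential:
  fixes G :: "'a::finite \<Rightarrow> 'a \<Rightarrow> real"
  assumes "\<And>x y. G x y = G y x" and "prob_meas \<nu>" and pot: "\<And>x. potential G \<nu> x = c"
    and "(\<Sum>x\<in>UNIV. \<mu> x) = 1"
  shows "Gform G (\<lambda>z. \<mu> z - \<nu> z) (\<lambda>z. \<mu> z - \<nu> z) = Gform G \<mu> \<mu> - c"
proof -
  have "Gform G \<mu> \<nu> = c" "Gform G \<nu> \<nu> = c"
    using assms(2,4) unfolding Gform_const_potential[OF pot] prob_meas_def by simp_all
  moreover have "Gform G \<nu> \<mu> = Gform G \<mu> \<nu>"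
    by (rule Gform_commute[OF assms(1)])
  ultimately show ?thesis
    unfolding Gform_diff by simp
qed

lemma equilibrium_if_LIMSEQ_energy_le:
  assumes eq: "equilibrium_measure G \<nu>"
    and lim: "\<And>x. (\<lambda>k. \<mu> k x) \<longlonglongrightarrow> \<mu>' x"
    and prob: "eventually (\<lambda>k. prob_meas (\<mu> k)) sequentially"
    and energy: "eventually (\<lambda>k. Gform G (\<mu> k) (\<mu> k) \<le> Gform G \<nu> \<nu> + e k) sequentially"
    and "e \<longlonglongrightarrow> 0"
  shows "equilibrium_measure G \<mu>'"
proof -
  have "(\<lambda>k. Gform G \<nu> \<nu> + e k) \<longlonglongrightarrow> Gform G \<nu> \<nu> + 0"
    by (intro tendsto_add tendsto_const \<open>e \<longlonglongrightarrow> 0\<close>)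
  then have "Gform G \<mu>' \<mu>' \<le> Gform G \<nu> \<nu>"
    using LIMSEQ_le[OF tendsto_Gform[OF lim]] energy by (simp add: eventually_sequentially)
  then show ?thesis
    using eq prob_meas_LIMSEQ[OF lim prob] unfolding equilibrium_measure_def by force
qed

lemma leja_empirical_distance_le:
  fixes G :: "'a::finite \<Rightarrow> 'a \<Rightarrow> real"
  assumes symm: "\<And>x y. G x y = G y x" and leja: "leja_seq G a"
    and prob: "prob_meas \<nu>" and pot: "\<And>x. potential G \<nu> x = c" and diag: "\<And>x. G x x \<le> M"
    and "n \<ge> 1"
  shows "Gform G (\<lambda>x. empirical a n x - \<nu> x) (\<lambda>x. empirical a n x - \<nu> x) \<le> (M - c) / real n"
proof -
  have "(\<Sum>x\<in>UNIV. empirical a n x) = 1"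
    using prob_meas_empirical[OF \<open>n \<ge> 1\<close>, of a] by (simp add: prob_meas_def)
  then have "Gform G (\<lambda>x. empirical a n x - \<nu> x) (\<lambda>x. empirical a n x - \<nu> x)
               = Gform G (empirical a n) (empirical a n) - c"
    by (rule Gform_diff_const_potential[OF symm prob pot])
  also have "\<dots> \<le> (M - c) / real n"
    using leja_empirical_energy_le[OF assms] by linarith
  finally show ?thesis .
qed

lemma leja_subseq_limit_equilibrium:
  fixes G :: "'a::finite \<Rightarrow> 'a \<Rightarrow> real"
  assumes symm: "\<And>x y. G x y = G y x" and leja: "leja_seq G a"
    and eq: "equilibrium_measure G \<nu>" and pot: "\<And>x. potential G \<nu> x = Gform G \<nu> \<nu>"
    and diag: "\<And>x. G x x \<le> M"
    and r: "strict_mono r" and lim: "\<And>x. (\<lambda>k. empirical a (r k) x) \<longlonglongrightarrow> \<mu> x"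
  shows "equilibrium_measure G \<mu>"
proof (rule equilibrium_if_LIMSEQ_energy_le[OF eq lim])
  have prob: "prob_meas \<nu>"
    using eq by (simp add: equilibrium_measure_def)
  have r_ge: "eventually (\<lambda>k. r k \<ge> 1) sequentially"
    unfolding eventually_sequentially using seq_suble[OF r] le_trans by blast
  then show "eventually (\<lambda>k. prob_meas (empirical a (r k))) sequentially"
    by (rule eventually_mono) (rule prob_meas_empirical)
  from r_ge show "eventually (\<lambda>k. Gform G (empirical a (r k)) (empirical a (r k))
                                \<le> Gform G \<nu> \<nu> + (M - Gform G \<nu> \<nu>) / real (r k)) sequentially"
    by (rule eventually_mono) (rule leja_empirical_energy_le[OF symm leja prob pot diag])
  show "(\<lambda>k. (M - Gform G \<nu> \<nu>) / real (r k)) \<longlonglongrightarrow> 0"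
    using LIMSEQ_subseq_LIMSEQ[OF lim_const_over_n r] by (simp add: o_def)
qed

theorem theorem5p1:
  fixes G :: "'a::finite \<Rightarrow> 'a \<Rightarrow> real"
    and \<nu>s :: "'a \<Rightarrow> real"
    and a :: "nat \<Rightarrow> 'a"
  assumes symm: "\<And>x y. G x y = G y x"
    and cpsd: "cond_psd G"
    and eq: "equilibrium_measure G \<nu>s"
    and pos: "pos_prob_meas \<nu>s"
    and leja: "leja_seq G a"
  shows "(\<forall>n::nat. n \<ge> 1 \<longrightarrow>
            Gform G (\<lambda>x. empirical a n x - \<nu>s x) (\<lambda>x. empirical a n x - \<nu>s x)
              \<le> (1 / real n) * (Max (range (\<lambda>x. \<bar>G x x\<bar>)) - Gform G \<nu>s \<nu>s))
       \<and> (\<forall>(r::nat \<Rightarrow> nat) \<mu>. strict_mono r \<longrightarrow>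
            (\<forall>x. (\<lambda>k. empirical a (r k) x) \<longlonglongrightarrow> \<mu> x) \<longrightarrow>
            equilibrium_measure G \<mu>)"
proof -
  define M where "M = Max (range (\<lambda>x. \<bar>G x x\<bar>))"
  have diag: "G x x \<le> M" for x
    unfolding M_def by (rule order_trans[OF abs_ge_self Max_ge]) auto
  have prob: "prob_meas \<nu>s"
    using eq by (simp add: equilibrium_measure_def)
  have pot: "potential G \<nu>s x = Gform G \<nu>s \<nu>s" for x
    using equilibrium_potential_const[OF symm eq] pos by (simp add: pos_prob_meas_def)
  show ?thesis
    using leja_empirical_distance_le[OF symm leja prob pot diag]
      leja_subseq_limit_equilibrium[OF symm leja eq pot diag]
    unfolding M_def by simp
qed

end
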